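(* For all finite multisets $\Phi,\Gamma$ and every formula $\chi$: if $\Phi,\Box\Gamma\Rightarrow\chi$ has a proof of height $h$ in $\mathsf{G4iSLt}$, then $\Phi,\Gamma\Rightarrow\chi$ has a proof in $\mathsf{G4iSLt}$ of height at most $h$.
   Context: Formulas are built by the grammar $\varphi ::= p \mid \bot \mid \varphi\land\varphi \mid \varphi\lor\varphi \mid \varphi\to\varphi \mid \Box\varphi$, with $p$ ranging over a countably infinite set of propositional variables. For a multiset $\Gamma$, $\Box\Gamma=\{\Box\psi:\psi\in\Gamma\}$; a boxed formula is one of the form $\Box\psi$. A sequent is $\Gamma\Rightarrow\chi$ with $\Gamma$ a finite multiset of formulas and $\chi$ a formula. The sequent calculus $\mathsf{G4iSLt}$ has the following rules, where $p$ is a propositional variable and $\Phi$ always denotes a multiset containing no boxed formula: (⊥L) $\bot,\Gamma\Rightarrow\chi$ (no premise); (IdP) $\Gamma,p\Rightarrow p$ (no premise); (∧L) from $\Gamma,\varphi,\psi\Rightarrow\chi$ infer $\Gamma,\varphi\land\psi\Rightarrow\chi$; (∧R) from $\Gamma\Rightarrow\varphi$ and $\Gamma\Rightarrow\psi$ infer $\Gamma\Rightarrow\varphi\land\psi$; (∨L) from $\Gamma,\varphi\Rightarrow\chi$ and $\Gamma,\psi\Rightarrow\chi$ infer $\Gamma,\varphi\lor\psi\Rightarrow\chi$; (∨R$_i$), $i\in\{1,2\}$: from $\Gamma\Rightarrow\varphi_i$ infer $\Gamma\Rightarrow\varphi_1\lor\varphi_2$; (p→L) from $\Gamma,p,\varphi\Rightarrow\chi$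 infer $\Gamma,p,p\to\varphi\Rightarrow\chi$; (→R) from $\Gamma,\varphi\Rightarrow\psi$ infer $\Gamma\Rightarrow\varphi\to\psi$; (□→L) from $\Phi,\Gamma,\psi,\Box\varphi\Rightarrow\varphi$ and $\Phi,\Box\Gamma,\psi\Rightarrow\chi$ infer $\Phi,\Box\Gamma,\Box\varphi\to\psi\Rightarrow\chi$; (SLtR) from $\Phi,\Gamma,\Box\varphi\Rightarrow\varphi$ infer $\Phi,\Box\Gamma\Rightarrow\Box\varphi$; (∧→L) from $\Gamma,\varphi\to(\psi\to\chi)\Rightarrow\delta$ infer $\Gamma,(\varphi\land\psi)\to\chi\Rightarrow\delta$; (∨→L) from $\Gamma,\varphi\to\chi,\psi\to\chi\Rightarrow\delta$ infer $\Gamma,(\varphi\lor\psi)\to\chi\Rightarrow\delta$; (→→L) from $\Gamma,\psi\to\chi\Rightarrow\varphi\to\psi$ and $\Gamma,\chi\Rightarrow\delta$ infer $\Gamma,(\varphi\to\psi)\to\chi\Rightarrow\delta$. (In the rules above $\Phi$ is box-free; in the claim, $\Phi$ is an arbitrary finite multiset.) A proof of a sequent $S$ is a finite tree of sequents with root $S$ in which each interior node together with its children forms an instance of a rule (conclusion, premises) and each leaf is the conclusion of a premise-free rule; $S$ is provable if it has a proof. The height of a proof is the maximum number of nodes on a path from the root to a leaf. *)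

theory Defs
  imports Main "HOL-Library.Multiset"
begin

datatype form =
    Var nat
  | Bot
  | And form form
  | Or form form
  | Imp form form
  | Box form

type_synonym sequent = "form multiset \<times> form"

fun is_box :: "form \<Rightarrow> bool" where
  "is_box (Box _) = True"
| "is_box _ = False"

definition box_free :: "form multiset \<Rightarrow> bool" where
  "box_free \<Phi> \<longleftrightarrow> (\<forall>\<phi> \<in># \<Phi>. \<not> is_box \<phi>)"

abbreviation boxms :: "form multiset \<Rightarrow> form multiset" where
  "boxms \<Gamma> \<equiv> image_mset Box \<Gamma>"

inductive g4islt_rule :: "sequent list \<Rightarrow> sequent \<Rightarrow> bool" where
  BotL: "g4islt_rule [] (add_mset Bot \<Gamma>, \<chi>)"
| IdP: "g4islt_rule [] (add_mset (Var p) \<Gamma>, Var p)"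
| AndL: "g4islt_rule [(add_mset \<phi> (add_mset \<psi> \<Gamma>), \<chi>)] (add_mset (And \<phi> \<psi>) \<Gamma>, \<chi>)"
| AndR: "g4islt_rule [(\<Gamma>, \<phi>), (\<Gamma>, \<psi>)] (\<Gamma>, And \<phi> \<psi>)"
| OrL: "g4islt_rule [(add_mset \<phi> \<Gamma>, \<chi>), (add_mset \<psi> \<Gamma>, \<chi>)] (add_mset (Or \<phi> \<psi>) \<Gamma>, \<chi>)"
| OrR1: "g4islt_rule [(\<Gamma>, \<phi>)] (\<Gamma>, Or \<phi> \<psi>)"
| OrR2: "g4islt_rule [(\<Gamma>, \<psi>)] (\<Gamma>, Or \<phi> \<psi>)"
| PImpL: "g4islt_rule [(add_mset (Var p) (add_mset \<phi> \<Gamma>), \<chi>)]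
                      (add_mset (Var p) (add_mset (Imp (Var p) \<phi>) \<Gamma>), \<chi>)"
| ImpR: "g4islt_rule [(add_mset \<phi> \<Gamma>, \<psi>)] (\<Gamma>, Imp \<phi> \<psi>)"
| BoxImpL: "box_free \<Phi> \<Longrightarrow>
    g4islt_rule [(\<Phi> + \<Gamma> + {#\<psi>, Box \<phi>#}, \<phi>), (\<Phi> + boxms \<Gamma> + {#\<psi>#}, \<chi>)]
                (\<Phi> + boxms \<Gamma> + {#Imp (Box \<phi>) \<psi>#}, \<chi>)"
| SLtR: "box_free \<Phi> \<Longrightarrow>
    g4islt_rule [(\<Phi> + \<Gamma> + {#Box \<phi>#}, \<phi>)] (\<Phi> + boxms \<Gamma>, Box \<phi>)"
| AndImpL: "g4islt_rule [(add_mset (Imp \<phi> (Imp \<psi> \<chi>)) \<Gamma>, \<delta>)]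
                        (add_mset (Imp (And \<phi> \<psi>) \<chi>) \<Gamma>, \<delta>)"
| OrImpL: "g4islt_rule [(add_mset (Imp \<phi> \<chi>) (add_mset (Imp \<psi> \<chi>) \<Gamma>), \<delta>)]
                       (add_mset (Imp (Or \<phi> \<psi>) \<chi>) \<Gamma>, \<delta>)"
| ImpImpL: "g4islt_rule [(add_mset (Imp \<psi> \<chi>) \<Gamma>, Imp \<phi> \<psi>), (add_mset \<chi> \<Gamma>, \<delta>)]
                        (add_mset (Imp (Imp \<phi> \<psi>) \<chi>) \<Gamma>, \<delta>)"

text \<open>provable_h S h: S has a proof (finite tree) of height exactly h,
  where height = max number of nodes on a root-to-leaf path (a leaf has height 1).\<close>
inductive provable_h :: "sequent \<Rightarrow> nat \<Rightarrow> bool" where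
  step: "g4islt_rule ps S \<Longrightarrow> list_all2 provable_h ps hs \<Longrightarrow>
         h = Suc (foldr max hs 0) \<Longrightarrow> provable_h S h"

end

theory Submission
  imports Defs
begin

text \<open>Stripping boxes from context formulas turns every rule
  instance into an instance of the same rule whose premises are again box-stripped versions of
  the original premises. For the rules other than \<open>\<box>\<rightarrow>L\<close> and SLtR a stripped
  formula is a side formula and simply travels into the premises. In \<open>\<box>\<rightarrow>L\<close> and SLtR it
  belongs to the boxed context \<open>\<box>\<Gamma>\<close>, which the left premise already unboxes; in the new
  instance it moves to the box-free part \<open>\<Phi>\<close> unless it is itself boxed. Since each premise
  is replaced by a derivation of no greater height, the height does not grow.\<close>

definition unboxing :: "form multiset \<Rightarrow> form multiset \<Rightarrow> bool" where
  "unboxing \<Delta> \<Delta>' \<longleftrightarrow> (\<exists>\<Phi> \<Gamma>. \<Delta> = \<Phi> + boxms \<Gamma> \<and> \<Delta>' = \<Phi> + \<Gamma>)"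

lemma unboxing_union: "unboxing \<Delta> \<Delta>' \<Longrightarrow> unboxing (\<Delta> + M) (\<Delta>' + M)"
  unfolding unboxing_def by (metis add.assoc add.commute)

lemma unboxing_add_mset: "unboxing \<Delta> \<Delta>' \<Longrightarrow> unboxing (add_mset A \<Delta>) (add_mset A \<Delta>')"
  using unboxing_union[of \<Delta> \<Delta>' "{#A#}"] by simp

lemma unboxing_add_mset_nonbox:
  assumes "unboxing (add_mset A \<Delta>) \<Delta>''" and "\<not> is_box A"
  obtains \<Delta>' where "\<Delta>'' = add_mset A \<Delta>'" and "unboxing \<Delta> \<Delta>'"
proof -
  obtain \<Phi> \<Gamma> where eq: "add_mset A \<Delta> = \<Phi> + boxms \<Gamma>" and \<Delta>'': "\<Delta>'' = \<Phi> + \<Gamma>"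
    using assms(1) unfolding unboxing_def by blast
  have "A \<notin># boxms \<Gamma>" using assms(2) by auto
  then have "A \<in># \<Phi>" by (metis eq union_iff union_single_eq_member)
  then obtain \<Phi>0 where "\<Phi> = add_mset A \<Phi>0" by (metis mset_add)
  with eq \<Delta>'' show thesis by (intro that[of "\<Phi>0 + \<Gamma>"]) (auto simp: unboxing_def)
qed

lemma box_free_boxms_split:
  obtains \<Phi> \<Gamma> where "\<Delta> = \<Phi> + boxms \<Gamma>" and "box_free \<Phi>"
proof (induction \<Delta> arbitrary: thesis)
  case empty
  then show ?case by (metis add_0 box_free_def empty_iff image_mset_empty set_mset_empty)
next
  case (add A \<Delta>)
  then obtain \<Phi> \<Gamma> where \<Delta>: "\<Delta> = \<Phi> + boxms \<Gamma>" and bf: "box_free \<Phi>" by blast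
  show ?case
  proof (cases A)
    case (Box B)
    then show ?thesis using add.prems[of \<Phi> "add_mset B \<Gamma>"] \<Delta> bf by simp
  qed (use add.prems[of "add_mset A \<Phi>" \<Gamma>] \<Delta> bf in \<open>simp_all add: box_free_def\<close>)
qed

lemma boxms_context_eqD:
  assumes "\<Phi> + boxms \<Gamma> = \<Psi> + boxms \<Gamma>'" and "box_free \<Psi>"
  obtains \<Gamma>0 where "\<Gamma>' = \<Gamma> + \<Gamma>0" and "\<Phi> = \<Psi> + boxms \<Gamma>0"
proof -
  have "filter_mset is_box \<Psi> = {#}"
    using assms(2) by (auto simp: box_free_def filter_mset_eq_conv)
  moreover have "filter_mset is_box (boxms \<Delta>) = boxms \<Delta>" for \<Delta>
    by (induction \<Delta>) auto
  ultimately have "boxms \<Gamma>' = boxms \<Gamma> + filter_mset is_box \<Phi>"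
    using arg_cong[OF assms(1), of "filter_mset is_box"] by (simp add: add.commute)
  then obtain \<Gamma>0 where \<Gamma>': "\<Gamma>' = \<Gamma> + \<Gamma>0" and "filter_mset is_box \<Phi> = boxms \<Gamma>0"
    by (metis image_mset_eq_image_mset_plusD form.inject(5) inj_onI)
  with assms(1) show thesis by (intro that[OF \<Gamma>']) (simp add: add.commute add.left_commute)
qed

lemma unboxing_box_free_context:
  assumes "unboxing (\<Psi> + boxms \<Gamma>) \<Delta>'" and "box_free \<Psi>"
  obtains \<Psi>' \<Gamma>' where "\<Delta>' = \<Psi>' + boxms \<Gamma>'" and "box_free \<Psi>'"
    and "unboxing (\<Psi> + \<Gamma>) (\<Psi>' + \<Gamma>')"
proof -
  obtain \<Phi>1 \<Gamma>1 where eq: "\<Psi> + boxms \<Gamma> = \<Phi>1 + boxms \<Gamma>1" and \<Delta>': "\<Delta>' = \<Phi>1 + \<Gamma>1"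
    using assms(1) unfolding unboxing_def by blast
  obtain \<Gamma>0 where \<Gamma>: "\<Gamma> = \<Gamma>1 + \<Gamma>0" and \<Phi>1: "\<Phi>1 = \<Psi> + boxms \<Gamma>0"
    using boxms_context_eqD[OF eq[symmetric] assms(2)] .
  txt \<open>The boxed members of \<open>\<Gamma>1\<close> must stay in the boxed context of the new rule instance.\<close>
  obtain \<Theta> \<Gamma>2 where \<Gamma>1: "\<Gamma>1 = \<Theta> + boxms \<Gamma>2" and "box_free \<Theta>"
    by (rule box_free_boxms_split)
  show thesis
  proof
    show "\<Delta>' = (\<Psi> + \<Theta>) + boxms (\<Gamma>0 + \<Gamma>2)"
      using \<Delta>' \<Phi>1 \<Gamma>1 by (simp add: ac_simps)
    show "box_free (\<Psi> + \<Theta>)"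
      using assms(2) \<open>box_free \<Theta>\<close> by (auto simp: box_free_def)
    have "\<Psi> + \<Gamma> = (\<Psi> + \<Theta> + \<Gamma>0) + boxms \<Gamma>2" and "\<Psi> + \<Theta> + (\<Gamma>0 + \<Gamma>2) = (\<Psi> + \<Theta> + \<Gamma>0) + \<Gamma>2"
      using \<Gamma> \<Gamma>1 by (simp_all add: ac_simps)
    then show "unboxing (\<Psi> + \<Gamma>) (\<Psi> + \<Theta> + (\<Gamma>0 + \<Gamma>2))"
      unfolding unboxing_def by blast
  qed
qed

definition unboxing_seq :: "sequent \<Rightarrow> sequent \<Rightarrow> bool" where
  "unboxing_seq S S' \<longleftrightarrow> unboxing (fst S) (fst S') \<and> snd S' = snd S"

lemma g4islt_rule_unboxing:
  assumes "g4islt_rule ps (\<Delta>, \<chi>)" and "unboxing \<Delta> \<Delta>'"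
  obtains ps' where "g4islt_rule ps' (\<Delta>', \<chi>)" and "list_all2 unboxing_seq ps ps'"
  using assms(1)
proof cases
  case (BotL \<Gamma>)
  then obtain \<Gamma>' where "\<Delta>' = add_mset Bot \<Gamma>'"
    using assms(2) by (auto elim: unboxing_add_mset_nonbox)
  then show thesis using that g4islt_rule.BotL BotL by simp
next
  case (IdP p \<Gamma>)
  then obtain \<Gamma>' where "\<Delta>' = add_mset (Var p) \<Gamma>'"
    using assms(2) by (auto elim: unboxing_add_mset_nonbox)
  then show thesis using that g4islt_rule.IdP IdP by simp
next
  case (AndL \<phi> \<psi> \<Gamma>)
  then obtain \<Gamma>' where "\<Delta>' = add_mset (And \<phi> \<psi>) \<Gamma>'" "unboxing \<Gamma> \<Gamma>'"
    using assms(2) by (auto elim: unboxing_add_mset_nonbox)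
  then show thesis using that g4islt_rule.AndL AndL
    by (fastforce simp: unboxing_seq_def unboxing_add_mset)
next
  case (AndR \<phi> \<psi>)
  then show thesis using that g4islt_rule.AndR assms(2)
    by (fastforce simp: unboxing_seq_def)
next
  case (OrL \<phi> \<Gamma> \<psi>)
  then obtain \<Gamma>' where "\<Delta>' = add_mset (Or \<phi> \<psi>) \<Gamma>'" "unboxing \<Gamma> \<Gamma>'"
    using assms(2) by (auto elim: unboxing_add_mset_nonbox)
  then show thesis using that g4islt_rule.OrL OrL
    by (fastforce simp: unboxing_seq_def unboxing_add_mset)
next
  case (OrR1 \<phi> \<psi>)
  then show thesis using that g4islt_rule.OrR1 assms(2)
    by (fastforce simp: unboxing_seq_def)
next
  case (OrR2 \<psi> \<phi>)
  then show thesis using that g4islt_rule.OrR2 assms(2)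
    by (fastforce simp: unboxing_seq_def)
next
  case (PImpL p \<phi> \<Gamma>)
  then obtain \<Gamma>' where "\<Delta>' = add_mset (Var p) (add_mset (Imp (Var p) \<phi>) \<Gamma>')" "unboxing \<Gamma> \<Gamma>'"
    using assms(2) by (auto elim!: unboxing_add_mset_nonbox)
  then show thesis using that g4islt_rule.PImpL PImpL
    by (fastforce simp: unboxing_seq_def unboxing_add_mset)
next
  case (ImpR \<phi> \<psi>)
  then show thesis using that g4islt_rule.ImpR assms(2)
    by (fastforce simp: unboxing_seq_def unboxing_add_mset)
next
  case (BoxImpL \<Phi> \<Gamma> \<psi> \<phi>)
  then obtain \<Delta>0 where \<Delta>': "\<Delta>' = add_mset (Imp (Box \<phi>) \<psi>) \<Delta>0"
    and \<Delta>0: "unboxing (\<Phi> + boxms \<Gamma>) \<Delta>0"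
    using assms(2) by (auto elim: unboxing_add_mset_nonbox)
  obtain \<Phi>' \<Gamma>' where "\<Delta>0 = \<Phi>' + boxms \<Gamma>'" and "box_free \<Phi>'"
    and "unboxing (\<Phi> + \<Gamma>) (\<Phi>' + \<Gamma>')"
    using \<Delta>0 BoxImpL(3) by (rule unboxing_box_free_context)
  show thesis
  proof (rule that)
    show "g4islt_rule [(\<Phi>' + \<Gamma>' + {#\<psi>, Box \<phi>#}, \<phi>), (\<Phi>' + boxms \<Gamma>' + {#\<psi>#}, \<chi>)] (\<Delta>', \<chi>)"
      using g4islt_rule.BoxImpL[OF \<open>box_free \<Phi>'\<close>] \<Delta>' \<open>\<Delta>0 = \<Phi>' + boxms \<Gamma>'\<close> by simp
    show "list_all2 unboxing_seq ps [(\<Phi>' + \<Gamma>' + {#\<psi>, Box \<phi>#}, \<phi>), (\<Phi>' + boxms \<Gamma>' + {#\<psi>#}, \<chi>)]"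
      using BoxImpL(1) \<Delta>0 \<open>\<Delta>0 = \<Phi>' + boxms \<Gamma>'\<close> \<open>unboxing (\<Phi> + \<Gamma>) (\<Phi>' + \<Gamma>')\<close>
      by (simp add: unboxing_seq_def unboxing_add_mset)
  qed
next
  case (SLtR \<Phi> \<Gamma> \<phi>)
  then obtain \<Phi>' \<Gamma>' where \<Delta>': "\<Delta>' = \<Phi>' + boxms \<Gamma>'" and "box_free \<Phi>'"
    and "unboxing (\<Phi> + \<Gamma>) (\<Phi>' + \<Gamma>')"
    using assms(2) by (auto elim: unboxing_box_free_context)
  show thesis
  proof (rule that)
    show "g4islt_rule [(\<Phi>' + \<Gamma>' + {#Box \<phi>#}, \<phi>)] (\<Delta>', \<chi>)"
      using g4islt_rule.SLtR[OF \<open>box_free \<Phi>'\<close>] \<Delta>' SLtR(3) by simp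
    show "list_all2 unboxing_seq ps [(\<Phi>' + \<Gamma>' + {#Box \<phi>#}, \<phi>)]"
      using SLtR(1) \<open>unboxing (\<Phi> + \<Gamma>) (\<Phi>' + \<Gamma>')\<close>
      by (simp add: unboxing_seq_def unboxing_add_mset)
  qed
next
  case (AndImpL \<phi> \<psi> \<chi>' \<Gamma>)
  then obtain \<Gamma>' where "\<Delta>' = add_mset (Imp (And \<phi> \<psi>) \<chi>') \<Gamma>'" "unboxing \<Gamma> \<Gamma>'"
    using assms(2) by (auto elim: unboxing_add_mset_nonbox)
  then show thesis using that g4islt_rule.AndImpL AndImpL
    by (fastforce simp: unboxing_seq_def unboxing_add_mset)
next
  case (OrImpL \<phi> \<chi>' \<psi> \<Gamma>)
  then obtain \<Gamma>' where "\<Delta>' = add_mset (Imp (Or \<phi> \<psi>) \<chi>') \<Gamma>'" "unboxing \<Gamma> \<Gamma>'"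
    using assms(2) by (auto elim: unboxing_add_mset_nonbox)
  then show thesis using that g4islt_rule.OrImpL OrImpL
    by (fastforce simp: unboxing_seq_def unboxing_add_mset)
next
  case (ImpImpL \<psi> \<chi>' \<Gamma> \<phi>)
  then obtain \<Gamma>' where "\<Delta>' = add_mset (Imp (Imp \<phi> \<psi>) \<chi>') \<Gamma>'" "unboxing \<Gamma> \<Gamma>'"
    using assms(2) by (auto elim: unboxing_add_mset_nonbox)
  then show thesis using that g4islt_rule.ImpImpL ImpImpL
    by (fastforce simp: unboxing_seq_def unboxing_add_mset)
qed

lemma list_all2_foldr_max_le:
  assumes "list_all2 (\<lambda>x h. \<exists>h'\<le>h. P x h') xs hs"
  obtains hs' where "list_all2 P xs hs'" and "foldr max hs' 0 \<le> foldr max hs (0::nat)"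
  using assms
proof (induction arbitrary: thesis rule: list_all2_induct)
  case Nil
  then show ?case by simp
next
  case (Cons x xs h hs)
  obtain h' where "h' \<le> h" "P x h'" using Cons.hyps(1) by blast
  moreover obtain hs' where "list_all2 P xs hs'" "foldr max hs' 0 \<le> foldr max hs 0"
    using Cons.IH by blast
  ultimately show ?case by (intro Cons.prems[of "h' # hs'"]) (auto simp: le_max_iff_disj)
qed

lemma provable_h_unboxing:
  assumes "provable_h S h" and "unboxing_seq S S'"
  shows "\<exists>h'\<le>h. provable_h S' h'"
  using assms
proof (induction arbitrary: S' rule: provable_h.induct)
  case (step ps S hs h)
  obtain \<Delta> \<chi> \<Delta>' where S: "S = (\<Delta>, \<chi>)" and S': "S' = (\<Delta>', \<chi>)" and "unboxing \<Delta> \<Delta>'"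
    using step.prems by (cases S, cases S') (auto simp: unboxing_seq_def)
  then obtain ps' where rule': "g4islt_rule ps' S'" and "list_all2 unboxing_seq ps ps'"
    using step.hyps(1) by (auto elim: g4islt_rule_unboxing)
  then have flip: "list_all2 (\<lambda>p' p. unboxing_seq p p') ps' ps"
    by (simp add: list_all2_conv_all_nth)
  have "list_all2 (\<lambda>p' h. \<exists>h'\<le>h. provable_h p' h') ps' hs"
    by (rule list_all2_trans[OF _ flip step.IH]) blast
  then obtain hs' where "list_all2 provable_h ps' hs'" and "foldr max hs' 0 \<le> foldr max hs 0"
    by (rule list_all2_foldr_max_le)
  then show ?case
    using provable_h.step[OF rule'] step.hyps(2) by auto
qed

theorem mainTheorem7:
  fixes \<Phi> \<Gamma> :: "form multiset" and \<chi> :: form and h :: nat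
  assumes "provable_h (\<Phi> + boxms \<Gamma>, \<chi>) h"
  shows "\<exists>h'\<le>h. provable_h (\<Phi> + \<Gamma>, \<chi>) h'"
  using assms by (rule provable_h_unboxing) (auto simp: unboxing_seq_def unboxing_def)

end
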